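(* Let $\alpha,\beta,\gamma\in\mathbb{Z}_2^n$. Then (1) $\mathrm{cadp}_0(\alpha,\beta,\gamma)\ne0$ if and only if $\mathrm{adp}^{\oplus}(\alpha,\beta\to\gamma)\ne0$; (2) $\mathrm{cadp}_1(\alpha,\beta,\gamma)\ne0$ if and only if $\mathrm{adp}^{\oplus}(\alpha,\beta\to\gamma)\ne0$ and $\gamma\ne0$.
   Context: For $x\in\mathbb{Z}_2^n$, $x=(x_0,\dots,x_{n-1})$ is identified with the integer $\sum_i x_i2^{n-1-i}$; $+$ is addition modulo $2^n$, $\oplus$ is bitwise XOR. $\mathrm{adp}^{\oplus}(\alpha,\beta\to\gamma)=4^{-n}\#\{(x,y): (x+\alpha)\oplus(y+\beta)=(x\oplus y)+\gamma\}$. Indices $0,\dots,7$ are identified with $\mathbb{Z}_2^3$ via $(p_0,p_1,p_2)\leftrightarrow4p_0+2p_1+p_2$; $e_0,\dots,e_7$ are the standard basis row vectors of $\mathbb{Q}^8$. $A_0$ is $\frac14$ times the $8\times8$ matrix with rows $(4,0,0,1,0,1,1,0)$, $(0,0,0,1,0,1,0,0)$, $(0,0,0,1,0,0,1,0)$, $(0,0,0,1,0,0,0,0)$, $(0,0,0,0,0,1,1,0)$, $(0,0,0,0,0,1,0,0)$, $(0,0,0,0,0,0,1,0)$, $(0,\dots,0)$, and $(A_k)_{i,j}=(A_0)_{i\oplus k,j\oplus k}$. For $\alpha,\beta,\gamma$ let $\omega_i=4\alpha_i+2\beta_i+\gamma_i$. With $L_0=(1,0,1,0,1,0,1,0)$,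 $L_1=(0,1,0,1,0,1,0,1)$, $\mathrm{cadp}_c(\alpha,\beta,\gamma)=L_cA_{\omega_0}\cdots A_{\omega_{n-1}}e_0^T$. (It is known that $\mathrm{adp}^{\oplus}(\alpha,\beta\to\gamma)=(1,\dots,1)A_{\omega_0}\cdots A_{\omega_{n-1}}e_0^T=\mathrm{cadp}_0+\mathrm{cadp}_1$.) *)

theory Defs
  imports Complex_Main
begin

text \<open>Elements of Z_2^n are represented by natural numbers below 2^n; the
  i-th coordinate (i = 0 most significant) of x is bit x (n - 1 - i).
  Addition is modulo 2^n, XOR is bitwise.\<close>

definition adp :: "nat \<Rightarrow> nat \<Rightarrow> nat \<Rightarrow> nat \<Rightarrow> real" where
  "adp n \<alpha> \<beta> \<gamma> = real (card {(x, y). x < 2^n \<and> y < 2^n \<and>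
      xor ((x + \<alpha>) mod 2^n) ((y + \<beta>) mod 2^n) = ((xor x y) + \<gamma>) mod 2^n}) / 4 ^ n"

definition A0rows :: "real list list" where
  "A0rows = [[4,0,0,1,0,1,1,0],
             [0,0,0,1,0,1,0,0],
             [0,0,0,1,0,0,1,0],
             [0,0,0,1,0,0,0,0],
             [0,0,0,0,0,1,1,0],
             [0,0,0,0,0,1,0,0],
             [0,0,0,0,0,0,1,0],
             [0,0,0,0,0,0,0,0]]"

definition A0 :: "nat \<Rightarrow> nat \<Rightarrow> real" where
  "A0 i j = (A0rows ! i ! j) / 4"

definition Amat :: "nat \<Rightarrow> nat \<Rightarrow> nat \<Rightarrow> real" where
  "Amat k i j = A0 (xor i k) (xor j k)"

definition mmult :: "(nat \<Rightarrow> nat \<Rightarrow> real) \<Rightarrow> (nat \<Rightarrow> nat \<Rightarrow> real) \<Rightarrow> nat \<Rightarrow> nat \<Rightarrow> real" where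
  "mmult M N i j = (\<Sum>k<8. M i k * N k j)"

definition id8 :: "nat \<Rightarrow> nat \<Rightarrow> real" where
  "id8 i j = (if i = j then 1 else 0)"

definition coord :: "nat \<Rightarrow> nat \<Rightarrow> nat \<Rightarrow> nat" where
  "coord n x i = of_bool (bit x (n - 1 - i))"

definition omega :: "nat \<Rightarrow> nat \<Rightarrow> nat \<Rightarrow> nat \<Rightarrow> nat \<Rightarrow> nat" where
  "omega n \<alpha> \<beta> \<gamma> i = 4 * coord n \<alpha> i + 2 * coord n \<beta> i + coord n \<gamma> i"

definition Aprod :: "nat \<Rightarrow> nat \<Rightarrow> nat \<Rightarrow> nat \<Rightarrow> nat \<Rightarrow> nat \<Rightarrow> real" where
  "Aprod n \<alpha> \<beta> \<gamma> = foldr mmult (map (\<lambda>i. Amat (omega n \<alpha> \<beta> \<gamma> i)) [0..<n]) id8"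

definition Lvec :: "nat \<Rightarrow> nat \<Rightarrow> real" where
  "Lvec c j = (if j mod 2 = c then 1 else 0)"

definition cadp :: "nat \<Rightarrow> nat \<Rightarrow> nat \<Rightarrow> nat \<Rightarrow> nat \<Rightarrow> real" where
  "cadp c n \<alpha> \<beta> \<gamma> = (\<Sum>j<8. Lvec c j * Aprod n \<alpha> \<beta> \<gamma> j 0)"

end

theory Submission
  imports Defs
begin

text \<open>
  Index the rows and columns of the matrices by carry triples \<open>s = 4 c\<^sub>1 + 2 c\<^sub>2 + c\<^sub>3\<close>,
  where \<open>c\<^sub>1, c\<^sub>2, c\<^sub>3\<close> are the carries out of a bit position in \<open>x + \<alpha>\<close>, \<open>y + \<beta>\<close> and
  \<open>(x \<oplus> y) + \<gamma>\<close>. Then \<open>A\<^sub>\<omega>\<close> has a nonzero \<open>(s, k)\<close> entry iff, at a position with input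
  bits \<open>\<omega>\<close> and incoming carries \<open>k\<close>, some bits of \<open>x\<close> and \<open>y\<close> satisfy the equation and
  produce the outgoing carries \<open>s\<close>. Peeling off the top bit shows by induction that the
  support of column 0 of the product of the \<open>A\<^sub>\<omega>\<^sub>i\<close> is the set of final carry triples of
  the solutions \<open>(x, y)\<close>. Hence \<open>adp \<noteq> 0\<close> iff this support is nonempty, and \<open>cadp\<^sub>c \<noteq> 0\<close>
  iff some solution ends with last carry \<open>c\<^sub>3 = c\<close>, i.e. in a state of parity \<open>c\<close>.

  The support of \<open>A\<^sub>0\<close> consists of the pairs \<open>(i, j)\<close> with \<open>j\<close> of even weight and
  \<open>i \<subseteq> j\<close> bitwise, and that of \<open>A\<^sub>\<omega>\<close> is its translate by \<open>\<omega>\<close>. Consequently every reachable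
  support contains, in each weight-parity class it meets, a state with last carry 0; once a
  bit of \<open>\<gamma>\<close> has been 1, also one with last carry 1; and as long as all bits of \<open>\<gamma>\<close> are 0,
  only states with last carry 0.
\<close>

section \<open>Splitting off the top bit\<close>

lemma mod_pow2_Suc_split:
  fixes q r n :: nat
  assumes "r < 2 ^ n"
  shows "(q * 2 ^ n + r) mod 2 ^ Suc n = q mod 2 * 2 ^ n + r"
proof -
  have pow: "(2::nat) ^ Suc n = 2 ^ n * 2" by simp
  have "(q * 2 ^ n + r) div 2 ^ n = q" and "(q * 2 ^ n + r) mod 2 ^ n = r"
    using assms by simp_all
  then show ?thesis unfolding pow by (simp add: mod_mult2_eq)
qed

lemma div_pow2_Suc_split:
  fixes q r n :: nat
  assumes "r < 2 ^ n"
  shows "(q * 2 ^ n + r) div 2 ^ Suc n = q div 2"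
proof -
  have pow: "(2::nat) ^ Suc n = 2 ^ n * 2" by simp
  have "(q * 2 ^ n + r) div 2 ^ n = q" and "(q * 2 ^ n + r) mod 2 ^ n = r"
    using assms by simp_all
  then show ?thesis unfolding pow by (simp add: div_mult2_eq)
qed

lemma mult_pow2_add_eq_iff:
  fixes q1 q2 r1 r2 n :: nat
  assumes "r1 < 2 ^ n" and "r2 < 2 ^ n"
  shows "q1 * 2 ^ n + r1 = q2 * 2 ^ n + r2 \<longleftrightarrow> q1 = q2 \<and> r1 = r2"
proof
  assume eq: "q1 * 2 ^ n + r1 = q2 * 2 ^ n + r2"
  have "q1 = (q1 * 2 ^ n + r1) div 2 ^ n" using assms by simp
  also have "\<dots> = q2" unfolding eq using assms by simp
  finally show "q1 = q2 \<and> r1 = r2" using eq by simp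
qed simp

lemma add_mult_pow2_add:
  fixes q1 q2 r1 r2 n :: nat
  shows "(q1 * 2 ^ n + r1) + (q2 * 2 ^ n + r2)
    = (q1 + q2 + (r1 + r2) div 2 ^ n) * 2 ^ n + (r1 + r2) mod 2 ^ n"
  using div_mult_mod_eq[of "r1 + r2" "2 ^ n"] by (simp add: algebra_simps)

lemma ex_less_pow2_Suc:
  fixes P :: "nat \<Rightarrow> bool"
  shows "(\<exists>x < 2 ^ Suc n. P x) \<longleftrightarrow> (\<exists>xb < 2. \<exists>x < 2 ^ n. P (xb * 2 ^ n + x))"
proof
  assume "\<exists>x < 2 ^ Suc n. P x"
  then obtain x where "x < 2 ^ Suc n" and "P x" by blast
  then have "x div 2 ^ n < 2" and "P (x div 2 ^ n * 2 ^ n + x mod 2 ^ n)"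
    by (simp_all add: div_less_iff_less_mult mult.commute)
  then show "\<exists>xb < 2. \<exists>x < 2 ^ n. P (xb * 2 ^ n + x)" by force
next
  assume "\<exists>xb < 2. \<exists>x < 2 ^ n. P (xb * 2 ^ n + x)"
  then obtain xb x where "xb < 2" "x < 2 ^ n" "P (xb * 2 ^ n + x)" by blast
  moreover have "xb * 2 ^ n + x < 2 ^ Suc n"
    using \<open>xb < 2\<close> \<open>x < 2 ^ n\<close> by (auto simp: less_2_cases_iff)
  ultimately show "\<exists>x < 2 ^ Suc n. P x" by blast
qed

lemma carry_less_2:
  fixes x a n :: nat
  assumes "x < 2 ^ n" and "a < 2 ^ n"
  shows "(x + a) div 2 ^ n < 2"
  using assms by (simp add: div_less_iff_less_mult)

lemma xor_less_pow2:
  fixes x y n :: nat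
  assumes "x < 2 ^ n" and "y < 2 ^ n"
  shows "xor x y < 2 ^ n"
  using assms by (metis take_bit_xor take_bit_nat_eq_self_iff)

lemma xor_less_8: "i < 8 \<Longrightarrow> k < 8 \<Longrightarrow> xor i k < (8::nat)"
  using xor_less_pow2[of i 3 k] by simp

lemma xor_mult_pow2_add:
  fixes q1 q2 r1 r2 n :: nat
  assumes "r1 < 2 ^ n" and "r2 < 2 ^ n"
  shows "xor (q1 * 2 ^ n + r1) (q2 * 2 ^ n + r2) = xor q1 q2 * 2 ^ n + xor r1 r2"
proof -
  let ?x = "q1 * 2 ^ n + r1" and ?y = "q2 * 2 ^ n + r2"
  have "xor ?x ?y div 2 ^ n = xor q1 q2"
    using drop_bit_xor[of n ?x ?y] assms by (simp add: drop_bit_eq_div)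
  moreover have "xor ?x ?y mod 2 ^ n = xor r1 r2"
    using take_bit_xor[of n ?x ?y] assms by (simp add: take_bit_eq_mod)
  ultimately show ?thesis by (metis div_mult_mod_eq)
qed

lemma bit_mult_pow2_add:
  fixes q r n :: nat
  assumes "r < 2 ^ n"
  shows "bit (q * 2 ^ n + r) m = (if m < n then bit r m else bit q (m - n))"
proof (cases "m < n")
  case True
  have "take_bit n (q * 2 ^ n + r) = r"
    using assms unfolding take_bit_eq_mod by simp
  then have "bit r m \<longleftrightarrow> m < n \<and> bit (q * 2 ^ n + r) m"
    using bit_take_bit_iff[of n "q * 2 ^ n + r" m] by simp
  then show ?thesis using True by simp
next
  case False
  have "drop_bit n (q * 2 ^ n + r) = q"
    using assms unfolding drop_bit_eq_div by simp
  then have "bit q (m - n) \<longleftrightarrow> bit (q * 2 ^ n + r) (n + (m - n))"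
    using bit_drop_bit_eq[of n "q * 2 ^ n + r"] by simp
  then show ?thesis using False by simp
qed

lemma nonzero_iff_ex_bit_less:
  fixes x :: nat
  assumes "x < 2 ^ n"
  shows "x \<noteq> 0 \<longleftrightarrow> (\<exists>m<n. bit x m)"
proof
  assume "x \<noteq> 0"
  then obtain m where "bit x m" using bit_eqI[of x 0] by auto
  moreover have "take_bit n x = x" using assms by (simp add: take_bit_nat_eq_self_iff)
  ultimately show "\<exists>m<n. bit x m" by (metis bit_take_bit_iff)
next
  assume "\<exists>m<n. bit x m"
  then obtain m where "bit x m" by blast
  show "x \<noteq> 0"
  proof
    assume "x = 0"
    with \<open>bit x m\<close> show False by simp
  qed
qed

section \<open>Solutions and their carries\<close>

definition adp_solution :: "nat \<Rightarrow> nat \<Rightarrow> nat \<Rightarrow> nat \<Rightarrow> nat \<Rightarrow> nat \<Rightarrow> bool" where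
  "adp_solution n \<alpha> \<beta> \<gamma> x y \<longleftrightarrow>
     xor ((x + \<alpha>) mod 2 ^ n) ((y + \<beta>) mod 2 ^ n) = (xor x y + \<gamma>) mod 2 ^ n"

definition carry_state :: "nat \<Rightarrow> nat \<Rightarrow> nat \<Rightarrow> nat \<Rightarrow> nat \<Rightarrow> nat \<Rightarrow> nat" where
  "carry_state n \<alpha> \<beta> \<gamma> x y =
     4 * ((x + \<alpha>) div 2 ^ n) + 2 * ((y + \<beta>) div 2 ^ n) + (xor x y + \<gamma>) div 2 ^ n"

definition carry_transition ::
    "nat \<Rightarrow> nat \<Rightarrow> nat \<Rightarrow> nat \<Rightarrow> nat \<Rightarrow> nat \<Rightarrow> nat \<Rightarrow> nat \<Rightarrow> nat \<Rightarrow> bool" where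
  "carry_transition a b g ca cb cc x y s \<longleftrightarrow>
     xor ((x + a + ca) mod 2) ((y + b + cb) mod 2) = (xor x y + g + cc) mod 2 \<and>
     s = 4 * ((x + a + ca) div 2) + 2 * ((y + b + cb) div 2) + (xor x y + g + cc) div 2"

lemma carry_state_less_8:
  assumes "\<alpha> < 2 ^ n" "\<beta> < 2 ^ n" "\<gamma> < 2 ^ n" "x < 2 ^ n" "y < 2 ^ n"
  shows "carry_state n \<alpha> \<beta> \<gamma> x y < 8"
  using carry_less_2[of x n \<alpha>] carry_less_2[of y n \<beta>] carry_less_2[of "xor x y" n \<gamma>]
    xor_less_pow2[of x n y] assms
  unfolding carry_state_def by linarith

lemma adp_solution_Suc:
  fixes n a b g xb yb \<alpha> \<beta> \<gamma> x y s :: nat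
  assumes "x < 2 ^ n" and "y < 2 ^ n"
  defines "ca \<equiv> (x + \<alpha>) div 2 ^ n" and "cb \<equiv> (y + \<beta>) div 2 ^ n"
    and "cc \<equiv> (xor x y + \<gamma>) div 2 ^ n"
  shows "adp_solution (Suc n) (a * 2 ^ n + \<alpha>) (b * 2 ^ n + \<beta>) (g * 2 ^ n + \<gamma>)
           (xb * 2 ^ n + x) (yb * 2 ^ n + y)
       \<and> carry_state (Suc n) (a * 2 ^ n + \<alpha>) (b * 2 ^ n + \<beta>) (g * 2 ^ n + \<gamma>)
           (xb * 2 ^ n + x) (yb * 2 ^ n + y) = s
     \<longleftrightarrow> adp_solution n \<alpha> \<beta> \<gamma> x y \<and> carry_transition a b g ca cb cc xb yb s"
proof -
  define ra rb rc where "ra = (x + \<alpha>) mod 2 ^ n" and "rb = (y + \<beta>) mod 2 ^ n"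
    and "rc = (xor x y + \<gamma>) mod 2 ^ n"
  have r: "ra < 2 ^ n" "rb < 2 ^ n" "rc < 2 ^ n" "xor ra rb < 2 ^ n"
    using xor_less_pow2 by (simp_all add: ra_def rb_def rc_def)
  have sum_a: "(xb * 2 ^ n + x) + (a * 2 ^ n + \<alpha>) = (xb + a + ca) * 2 ^ n + ra"
    and sum_b: "(yb * 2 ^ n + y) + (b * 2 ^ n + \<beta>) = (yb + b + cb) * 2 ^ n + rb"
    using add_mult_pow2_add unfolding ca_def cb_def ra_def rb_def by (simp_all add: add.commute)
  have sum_c: "xor (xb * 2 ^ n + x) (yb * 2 ^ n + y) + (g * 2 ^ n + \<gamma>)
      = (xor xb yb + g + cc) * 2 ^ n + rc"
    using xor_mult_pow2_add[OF assms(1,2)] add_mult_pow2_add unfolding cc_def rc_def by simp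
  note top_mod = mod_pow2_Suc_split[OF r(1)] mod_pow2_Suc_split[OF r(2)] mod_pow2_Suc_split[OF r(3)]
  note top_div = div_pow2_Suc_split[OF r(1)] div_pow2_Suc_split[OF r(2)] div_pow2_Suc_split[OF r(3)]
  have "adp_solution (Suc n) (a * 2 ^ n + \<alpha>) (b * 2 ^ n + \<beta>) (g * 2 ^ n + \<gamma>)
      (xb * 2 ^ n + x) (yb * 2 ^ n + y)
    \<longleftrightarrow> xor ((xb + a + ca) mod 2) ((yb + b + cb) mod 2) = (xor xb yb + g + cc) mod 2
      \<and> xor ra rb = rc"
    unfolding adp_solution_def sum_a sum_b sum_c top_mod xor_mult_pow2_add[OF r(1,2)]
    using mult_pow2_add_eq_iff[OF r(4,3)] .
  moreover have "carry_state (Suc n) (a * 2 ^ n + \<alpha>) (b * 2 ^ n + \<beta>) (g * 2 ^ n + \<gamma>)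
      (xb * 2 ^ n + x) (yb * 2 ^ n + y)
    = 4 * ((xb + a + ca) div 2) + 2 * ((yb + b + cb) div 2) + (xor xb yb + g + cc) div 2"
    unfolding carry_state_def sum_a sum_b sum_c top_div ..
  moreover have "adp_solution n \<alpha> \<beta> \<gamma> x y \<longleftrightarrow> xor ra rb = rc"
    unfolding adp_solution_def ra_def rb_def rc_def ..
  ultimately show ?thesis unfolding carry_transition_def by auto
qed

lemma adp_nonzero_iff:
  "adp n \<alpha> \<beta> \<gamma> \<noteq> 0 \<longleftrightarrow> (\<exists>x<2 ^ n. \<exists>y<2 ^ n. adp_solution n \<alpha> \<beta> \<gamma> x y)"
proof -
  have "finite {(x, y). x < 2 ^ n \<and> y < 2 ^ n \<and> adp_solution n \<alpha> \<beta> \<gamma> x y}"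
    by (rule finite_subset[of _ "{..<2 ^ n} \<times> {..<2 ^ n}"]) auto
  then show ?thesis
    unfolding adp_def adp_solution_def[symmetric] by auto
qed

section \<open>Supports of products of the matrices\<close>

definition omega_list :: "nat \<Rightarrow> nat \<Rightarrow> nat \<Rightarrow> nat \<Rightarrow> nat list" where
  "omega_list n \<alpha> \<beta> \<gamma> = map (omega n \<alpha> \<beta> \<gamma>) [0..<n]"

lemma omega_list_less_8: "\<forall>w\<in>set (omega_list n \<alpha> \<beta> \<gamma>). w < 8"
  unfolding omega_list_def omega_def coord_def by simp

lemma omega_list_Suc:
  assumes "a < 2" "b < 2" "g < 2" "\<alpha> < 2 ^ n" "\<beta> < 2 ^ n" "\<gamma> < 2 ^ n"
  shows "omega_list (Suc n) (a * 2 ^ n + \<alpha>) (b * 2 ^ n + \<beta>) (g * 2 ^ n + \<gamma>)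
    = (4 * a + 2 * b + g) # omega_list n \<alpha> \<beta> \<gamma>"
proof -
  have top: "coord (Suc n) (c * 2 ^ n + \<delta>) 0 = c" if "c < 2" "\<delta> < 2 ^ n" for c \<delta> :: nat
    using that by (auto simp: coord_def bit_mult_pow2_add bit_0 less_2_cases_iff)
  have low: "coord (Suc n) (c * 2 ^ n + \<delta>) (Suc i) = coord n \<delta> i"
    if "\<delta> < 2 ^ n" "i < n" for c \<delta> i :: nat
    using that by (simp add: coord_def bit_mult_pow2_add)
  have "[0..<Suc n] = 0 # map Suc [0..<n]" by (simp add: upt_conv_Cons map_Suc_upt)
  then show ?thesis using assms by (simp add: omega_list_def omega_def top low)
qed

lemma odd_omega_iff_nonzero:
  assumes "\<gamma> < 2 ^ n"
  shows "(\<exists>w\<in>set (omega_list n \<alpha> \<beta> \<gamma>). odd w) \<longleftrightarrow> \<gamma> \<noteq> 0"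
proof -
  have "(\<exists>w\<in>set (omega_list n \<alpha> \<beta> \<gamma>). odd w) \<longleftrightarrow> (\<exists>i<n. bit \<gamma> (n - 1 - i))"
    by (auto simp: omega_list_def omega_def coord_def)
  also have "\<dots> \<longleftrightarrow> (\<exists>m<n. bit \<gamma> m)"
  proof
    assume "\<exists>i<n. bit \<gamma> (n - 1 - i)"
    then obtain i where "i < n" "bit \<gamma> (n - 1 - i)" by blast
    then show "\<exists>m<n. bit \<gamma> m" by (intro exI[of _ "n - 1 - i"]) auto
  next
    assume "\<exists>m<n. bit \<gamma> m"
    then obtain m where "m < n" "bit \<gamma> m" by blast
    moreover have "n - 1 - (n - 1 - m) = m" using \<open>m < n\<close> by simp
    ultimately show "\<exists>i<n. bit \<gamma> (n - 1 - i)" by (intro exI[of _ "n - 1 - m"]) auto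
  qed
  finally show ?thesis using nonzero_iff_ex_bit_less[OF assms] by simp
qed

definition Aprod_list :: "nat list \<Rightarrow> nat \<Rightarrow> nat \<Rightarrow> real" where
  "Aprod_list ws = foldr mmult (map Amat ws) id8"

lemma Aprod_eq_Aprod_list: "Aprod n \<alpha> \<beta> \<gamma> = Aprod_list (omega_list n \<alpha> \<beta> \<gamma>)"
  unfolding Aprod_def Aprod_list_def omega_list_def by (simp add: comp_def)

lemma A0_nonneg: "i < 8 \<Longrightarrow> j < 8 \<Longrightarrow> 0 \<le> A0 i j"
  by (auto simp: A0_def A0rows_def less_Suc_eq numeral_eq_Suc)

lemma Amat_nonneg: "k < 8 \<Longrightarrow> i < 8 \<Longrightarrow> j < 8 \<Longrightarrow> 0 \<le> Amat k i j"
  unfolding Amat_def by (simp add: A0_nonneg xor_less_8)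

lemma Aprod_list_nonneg: "\<forall>w\<in>set ws. w < 8 \<Longrightarrow> i < 8 \<Longrightarrow> j < 8 \<Longrightarrow> 0 \<le> Aprod_list ws i j"
proof (induction ws arbitrary: i)
  case Nil
  then show ?case by (simp add: Aprod_list_def id8_def)
next
  case (Cons w ws)
  then show ?case
    by (auto simp: Aprod_list_def mmult_def Amat_nonneg intro!: sum_nonneg mult_nonneg_nonneg)
qed

lemma mmult_nonzero_iff:
  assumes "\<forall>k<8. 0 \<le> M i k" and "\<forall>k<8. 0 \<le> N k j"
  shows "mmult M N i j \<noteq> 0 \<longleftrightarrow> (\<exists>k<8. M i k \<noteq> 0 \<and> N k j \<noteq> 0)"
proof -
  have "mmult M N i j = 0 \<longleftrightarrow> (\<forall>k\<in>{..<8}. M i k * N k j = 0)"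
    unfolding mmult_def using assms by (intro sum_nonneg_eq_0_iff) auto
  then show ?thesis by auto
qed

definition carry_support :: "nat list \<Rightarrow> nat set" where
  "carry_support ws = {s. s < 8 \<and> Aprod_list ws s 0 \<noteq> 0}"

lemma carry_support_Nil: "carry_support [] = {0}"
  by (auto simp: carry_support_def Aprod_list_def id8_def)

lemma carry_support_Cons:
  assumes "\<forall>v\<in>set (w # ws). v < 8"
  shows "carry_support (w # ws) = {s. s < 8 \<and> (\<exists>j\<in>carry_support ws. Amat w s j \<noteq> 0)}"
proof -
  have "Aprod_list (w # ws) s 0 \<noteq> 0 \<longleftrightarrow> (\<exists>j<8. Amat w s j \<noteq> 0 \<and> Aprod_list ws j 0 \<noteq> 0)"
    if "s < 8" for s
    unfolding Aprod_list_def foldr_Cons list.map o_apply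
    using assms that Aprod_list_nonneg[unfolded Aprod_list_def]
    by (intro mmult_nonzero_iff) (auto simp: Amat_nonneg)
  then show ?thesis by (auto simp: carry_support_def)
qed

lemma cadp_nonzero_iff:
  "cadp c n \<alpha> \<beta> \<gamma> \<noteq> 0 \<longleftrightarrow> (\<exists>s\<in>carry_support (omega_list n \<alpha> \<beta> \<gamma>). s mod 2 = c)"
proof -
  have "0 \<le> Lvec c j * Aprod n \<alpha> \<beta> \<gamma> j 0" if "j < 8" for j
    using that Aprod_list_nonneg[OF omega_list_less_8]
    by (auto simp: Lvec_def Aprod_eq_Aprod_list)
  then have "cadp c n \<alpha> \<beta> \<gamma> = 0 \<longleftrightarrow> (\<forall>j\<in>{..<8}. Lvec c j * Aprod n \<alpha> \<beta> \<gamma> j 0 = 0)"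
    unfolding cadp_def by (intro sum_nonneg_eq_0_iff) auto
  then show ?thesis by (auto simp: carry_support_def Lvec_def Aprod_eq_Aprod_list)
qed

section \<open>The carry automaton\<close>

lemma Amat_nonzero_iff_carry_transition:
  assumes "a < 2" "b < 2" "g < 2" "ca < 2" "cb < 2" "cc < 2" "s < 8"
  shows "Amat (4 * a + 2 * b + g) s (4 * ca + 2 * cb + cc) \<noteq> 0
    \<longleftrightarrow> (\<exists>x<2. \<exists>y<2. carry_transition a b g ca cb cc x y s)"
proof -
  have "\<forall>a\<in>set [0..<2]. \<forall>b\<in>set [0..<2]. \<forall>g\<in>set [0..<2].
    \<forall>ca\<in>set [0..<2]. \<forall>cb\<in>set [0..<2]. \<forall>cc\<in>set [0..<2]. \<forall>s\<in>set [0..<8].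
      (Amat (4 * a + 2 * b + g) s (4 * ca + 2 * cb + cc) \<noteq> 0)
      = (\<exists>x\<in>set [0..<2]. \<exists>y\<in>set [0..<2]. carry_transition a b g ca cb cc x y s)"
    by code_simp
  from this[unfolded set_upt atLeast0LessThan Ball_def lessThan_iff, rule_format, OF assms]
  show ?thesis unfolding Bex_def lessThan_iff .
qed

lemma carry_support_Suc_iff:
  assumes IH: "carry_support (omega_list n \<alpha> \<beta> \<gamma>) = {carry_state n \<alpha> \<beta> \<gamma> x y | x y.
      x < 2 ^ n \<and> y < 2 ^ n \<and> adp_solution n \<alpha> \<beta> \<gamma> x y}"
    and bits: "a < 2" "b < 2" "g < 2" and low: "\<alpha> < 2 ^ n" "\<beta> < 2 ^ n" "\<gamma> < 2 ^ n"
    and "s < 8"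
  defines "\<alpha>\<^sub>1 \<equiv> a * 2 ^ n + \<alpha>" and "\<beta>\<^sub>1 \<equiv> b * 2 ^ n + \<beta>" and "\<gamma>\<^sub>1 \<equiv> g * 2 ^ n + \<gamma>"
  shows "s \<in> carry_support (omega_list (Suc n) \<alpha>\<^sub>1 \<beta>\<^sub>1 \<gamma>\<^sub>1)
    \<longleftrightarrow> (\<exists>x<2 ^ Suc n. \<exists>y<2 ^ Suc n. adp_solution (Suc n) \<alpha>\<^sub>1 \<beta>\<^sub>1 \<gamma>\<^sub>1 x y
          \<and> carry_state (Suc n) \<alpha>\<^sub>1 \<beta>\<^sub>1 \<gamma>\<^sub>1 x y = s)"
proof -
  let ?w = "4 * a + 2 * b + g"
  have ws8: "\<forall>v\<in>set (?w # omega_list n \<alpha> \<beta> \<gamma>). v < 8" using bits omega_list_less_8 by auto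
  have "s \<in> carry_support (omega_list (Suc n) \<alpha>\<^sub>1 \<beta>\<^sub>1 \<gamma>\<^sub>1)
      \<longleftrightarrow> (\<exists>j\<in>carry_support (omega_list n \<alpha> \<beta> \<gamma>). Amat ?w s j \<noteq> 0)"
    unfolding \<alpha>\<^sub>1_def \<beta>\<^sub>1_def \<gamma>\<^sub>1_def omega_list_Suc[OF bits low] carry_support_Cons[OF ws8]
    using \<open>s < 8\<close> by simp
  also have "\<dots> \<longleftrightarrow> (\<exists>x<2 ^ n. \<exists>y<2 ^ n. adp_solution n \<alpha> \<beta> \<gamma> x y
      \<and> Amat ?w s (carry_state n \<alpha> \<beta> \<gamma> x y) \<noteq> 0)"
    unfolding IH by blast
  also have "\<dots> \<longleftrightarrow> (\<exists>x<2 ^ n. \<exists>y<2 ^ n. adp_solution n \<alpha> \<beta> \<gamma> x y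
      \<and> (\<exists>xb<2. \<exists>yb<2. carry_transition a b g ((x + \<alpha>) div 2 ^ n) ((y + \<beta>) div 2 ^ n)
            ((xor x y + \<gamma>) div 2 ^ n) xb yb s))"
  proof -
    have "Amat ?w s (carry_state n \<alpha> \<beta> \<gamma> x y) \<noteq> 0 \<longleftrightarrow> (\<exists>xb<2. \<exists>yb<2.
        carry_transition a b g ((x + \<alpha>) div 2 ^ n) ((y + \<beta>) div 2 ^ n) ((xor x y + \<gamma>) div 2 ^ n) xb yb s)"
      if "x < 2 ^ n" "y < 2 ^ n" for x y
      unfolding carry_state_def using that low xor_less_pow2[OF that]
      by (simp add: Amat_nonzero_iff_carry_transition bits carry_less_2 \<open>s < 8\<close>)
    then show ?thesis by blast
  qed
  also have "\<dots> \<longleftrightarrow> (\<exists>xb<2. \<exists>x<2 ^ n. \<exists>yb<2. \<exists>y<2 ^ n.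
      adp_solution (Suc n) \<alpha>\<^sub>1 \<beta>\<^sub>1 \<gamma>\<^sub>1 (xb * 2 ^ n + x) (yb * 2 ^ n + y)
      \<and> carry_state (Suc n) \<alpha>\<^sub>1 \<beta>\<^sub>1 \<gamma>\<^sub>1 (xb * 2 ^ n + x) (yb * 2 ^ n + y) = s)"
    unfolding \<alpha>\<^sub>1_def \<beta>\<^sub>1_def \<gamma>\<^sub>1_def using adp_solution_Suc by blast
  finally show ?thesis unfolding ex_less_pow2_Suc .
qed

lemma carry_support_eq_solutions:
  assumes "\<alpha> < 2 ^ n" "\<beta> < 2 ^ n" "\<gamma> < 2 ^ n"
  shows "carry_support (omega_list n \<alpha> \<beta> \<gamma>) = {carry_state n \<alpha> \<beta> \<gamma> x y | x y.
    x < 2 ^ n \<and> y < 2 ^ n \<and> adp_solution n \<alpha> \<beta> \<gamma> x y}"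
  using assms
proof (induction n arbitrary: \<alpha> \<beta> \<gamma>)
  case 0
  then show ?case
    by (auto simp: omega_list_def carry_support_Nil adp_solution_def carry_state_def)
next
  case (Suc n)
  have top: "\<alpha> div 2 ^ n < 2" "\<beta> div 2 ^ n < 2" "\<gamma> div 2 ^ n < 2"
    using Suc.prems by (simp_all add: div_less_iff_less_mult mult.commute)
  have low: "\<alpha> mod 2 ^ n < 2 ^ n" "\<beta> mod 2 ^ n < 2 ^ n" "\<gamma> mod 2 ^ n < 2 ^ n"
    by simp_all
  have "s \<in> carry_support (omega_list (Suc n) \<alpha> \<beta> \<gamma>) \<longleftrightarrow> s \<in> {carry_state (Suc n) \<alpha> \<beta> \<gamma> x y | x y.
      x < 2 ^ Suc n \<and> y < 2 ^ Suc n \<and> adp_solution (Suc n) \<alpha> \<beta> \<gamma> x y}" for s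
  proof (cases "s < 8")
    case True
    from carry_support_Suc_iff[OF Suc.IH[OF low] top low True]
    show ?thesis by (simp only: div_mult_mod_eq) blast
  next
    case False
    then show ?thesis
      using carry_state_less_8[OF Suc.prems] by (auto simp: carry_support_def)
  qed
  then show ?case by (rule set_eqI)
qed

lemma adp_nonzero_iff_carry_support:
  assumes "\<alpha> < 2 ^ n" "\<beta> < 2 ^ n" "\<gamma> < 2 ^ n"
  shows "adp n \<alpha> \<beta> \<gamma> \<noteq> 0 \<longleftrightarrow> carry_support (omega_list n \<alpha> \<beta> \<gamma>) \<noteq> {}"
  unfolding adp_nonzero_iff carry_support_eq_solutions[OF assms] by blast

section \<open>The support of \<open>A\<^sub>0\<close> and the last carry\<close>

definition odd_weight :: "nat \<Rightarrow> bool" where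
  "odd_weight s \<longleftrightarrow> (bit s 0 \<noteq> bit s 1) \<noteq> bit s 2"

lemma odd_weight_xor: "odd_weight (xor i j) \<longleftrightarrow> odd_weight i \<noteq> odd_weight j"
  unfolding odd_weight_def by (auto simp: bit_xor_iff)

lemma A0_nonzero_iff:
  assumes "i < 8" and "j < 8"
  shows "A0 i j \<noteq> 0 \<longleftrightarrow> \<not> odd_weight j \<and> and i j = i"
proof -
  have "\<forall>i\<in>set [0..<8]. \<forall>j\<in>set [0..<8]. (A0 i j \<noteq> 0) = (\<not> odd_weight j \<and> and i j = i)"
    by code_simp
  from this[unfolded set_upt atLeast0LessThan Ball_def lessThan_iff, rule_format, OF assms]
  show ?thesis .
qed

lemma Amat_nonzero_iff:
  assumes "k < 8" "i < 8" "j < 8"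
  shows "Amat k i j \<noteq> 0 \<longleftrightarrow> odd_weight j = odd_weight k \<and> and (xor i k) (xor j k) = xor i k"
  unfolding Amat_def using assms by (simp add: A0_nonzero_iff xor_less_8 odd_weight_xor)

lemma Amat_keep_last_carry:
  assumes "k < 8" "s < 8" "j < 8" and "Amat k s j \<noteq> 0"
  shows "\<exists>s'<8. Amat k s' j \<noteq> 0 \<and> odd s' = odd k \<and> odd_weight s' = odd_weight s"
proof (cases "odd s = odd k")
  case False
  have weight: "odd_weight j = odd_weight k"
    and sub: "and (xor s k) (xor j k) = xor s k"
    using assms by (simp_all add: Amat_nonzero_iff)
  have sub_bit: "bit s m \<noteq> bit k m \<Longrightarrow> bit j m \<noteq> bit k m" for m
    using bit_and_iff[of "xor s k" "xor j k" m] unfolding sub bit_xor_iff by blast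
  \<comment> \<open>Replace \<open>s \<oplus> k\<close> by its complement in \<open>j \<oplus> k\<close>; as \<open>j \<oplus> k\<close> has even weight, the weight
    parity is kept, and the last bit, which is set in both, is cleared.\<close>
  define s' where "s' = xor (xor j s) k"
  have "s' < 8" unfolding s'_def using assms by (simp add: xor_less_8)
  moreover have "and (xor s' k) (xor j k) = xor s' k"
  proof (rule bit_eqI)
    show "bit (and (xor s' k) (xor j k)) m \<longleftrightarrow> bit (xor s' k) m" for m
      using sub_bit[of m] unfolding s'_def by (auto simp: bit_and_iff bit_xor_iff)
  qed
  moreover have "odd j \<noteq> odd k"
    using sub_bit[of 0] False by (simp add: bit_0)
  ultimately show ?thesis
    using False weight assms
    by (intro exI[of _ s']) (auto simp: s'_def Amat_nonzero_iff even_xor_iff odd_weight_xor)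
qed (use assms in blast)

lemma Amat_switch_last_carry:
  assumes "k < 8" "j < 8" and "odd_weight j = odd_weight k" and "odd j \<noteq> odd k"
  shows "\<exists>s<8. Amat k s j \<noteq> 0 \<and> odd s = odd j \<and> odd_weight s = w"
  \<comment> \<open>\<open>j \<oplus> k\<close> is odd of even weight, so both \<open>j \<oplus> k\<close> itself and \<open>1\<close> are admissible for
    \<open>s \<oplus> k\<close>; they have opposite weight parities.\<close>
proof (cases "w = odd_weight k")
  case True
  then show ?thesis using assms by (intro exI[of _ j]) (simp add: Amat_nonzero_iff)
next
  case False
  have "odd (xor j k)" using assms(4) by (simp add: even_xor_iff)
  then have "and (xor (xor 1 k) k) (xor j k) = xor (xor 1 k) k"
    by (simp add: xor.assoc one_and_eq odd_iff_mod_2_eq_one)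
  moreover have "odd_weight 1" by (simp add: odd_weight_def bit_0)
  ultimately show ?thesis
    using False assms
    by (intro exI[of _ "xor 1 k"]) (auto simp: Amat_nonzero_iff xor_less_8 even_xor_iff odd_weight_xor)
qed

lemma Amat_last_carry_stays:
  assumes "k < 8" "s < 8" "j < 8" and "Amat k s j \<noteq> 0" and "odd j = odd k"
  shows "odd s = odd k"
proof -
  have "and (xor s k) (xor j k) = xor s k" using assms by (simp add: Amat_nonzero_iff)
  then have "even (xor s k)" using assms(5) by (metis even_and_iff even_xor_iff)
  then show ?thesis by (simp add: even_xor_iff)
qed

definition covers_last_carry :: "bool \<Rightarrow> nat set \<Rightarrow> bool" where
  "covers_last_carry b S \<longleftrightarrow> (\<forall>j\<in>S. \<exists>j'\<in>S. odd_weight j' = odd_weight j \<and> odd j' = b)"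

lemma covers_last_carry_step:
  assumes "S \<subseteq> {..<8}" "k < 8" and "covers_last_carry b S \<or> b = odd k"
  shows "covers_last_carry b {s. s < 8 \<and> (\<exists>j\<in>S. Amat k s j \<noteq> 0)}"
  unfolding covers_last_carry_def
proof (intro ballI)
  fix s assume "s \<in> {s. s < 8 \<and> (\<exists>j\<in>S. Amat k s j \<noteq> 0)}"
  then obtain j where "s < 8" "j \<in> S" "j < 8" "Amat k s j \<noteq> 0" using assms(1) by blast
  then have weight: "odd_weight j = odd_weight k" using assms(2) by (simp add: Amat_nonzero_iff)
  show "\<exists>s'\<in>{s. s < 8 \<and> (\<exists>j\<in>S. Amat k s j \<noteq> 0)}. odd_weight s' = odd_weight s \<and> odd s' = b"
  proof (cases "b = odd k")
    case True
    with Amat_keep_last_carry[OF assms(2) \<open>s < 8\<close> \<open>j < 8\<close> \<open>Amat k s j \<noteq> 0\<close>] \<open>j \<in> S\<close>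
    show ?thesis by auto
  next
    case False
    then obtain j' where "j' \<in> S" "odd_weight j' = odd_weight j" "odd j' = b"
      using assms(3) \<open>j \<in> S\<close> unfolding covers_last_carry_def by blast
    with Amat_switch_last_carry[of k j' "odd_weight s"] False weight assms(1,2) \<open>j' \<in> S\<close>
    show ?thesis by fastforce
  qed
qed

lemma carry_support_invariant:
  assumes "\<forall>w\<in>set ws. w < 8"
  shows "covers_last_carry False (carry_support ws)
    \<and> ((\<exists>w\<in>set ws. odd w) \<longrightarrow> covers_last_carry True (carry_support ws))
    \<and> ((\<forall>w\<in>set ws. even w) \<longrightarrow> (\<forall>s\<in>carry_support ws. even s))"
  using assms
proof (induction ws)
  case Nil
  then show ?case by (simp add: carry_support_Nil covers_last_carry_def)
next
  case (Cons w ws)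
  have "w < 8" and IH: "covers_last_carry False (carry_support ws)"
    "(\<exists>v\<in>set ws. odd v) \<Longrightarrow> covers_last_carry True (carry_support ws)"
    "\<forall>v\<in>set ws. even v \<Longrightarrow> \<forall>s\<in>carry_support ws. even s"
    using Cons by simp_all
  have sub: "carry_support ws \<subseteq> {..<8}" by (auto simp: carry_support_def)
  note supp = carry_support_Cons[OF Cons.prems]
  note step = covers_last_carry_step[OF sub \<open>w < 8\<close>]
  have "covers_last_carry False (carry_support (w # ws))"
    unfolding supp using step IH(1) by blast
  moreover have "covers_last_carry True (carry_support (w # ws))" if "\<exists>v\<in>set (w # ws). odd v"
    unfolding supp using step IH(2) that by (cases "odd w") auto
  moreover have "even s"
    if all_even: "\<forall>v\<in>set (w # ws). even v" and mem: "s \<in> carry_support (w # ws)" for s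
  proof -
    obtain j where "s < 8" "j \<in> carry_support ws" "Amat w s j \<noteq> 0"
      using mem unfolding supp by blast
    moreover have "even j" "even w" using IH(3) all_even \<open>j \<in> carry_support ws\<close> by auto
    ultimately show "even s"
      using Amat_last_carry_stays[OF \<open>w < 8\<close> \<open>s < 8\<close>] sub by auto
  qed
  ultimately show ?case by blast
qed

theorem proposition3:
  fixes n \<alpha> \<beta> \<gamma> :: nat
  assumes "\<alpha> < 2 ^ n" and "\<beta> < 2 ^ n" and "\<gamma> < 2 ^ n"
  shows "(cadp 0 n \<alpha> \<beta> \<gamma> \<noteq> 0 \<longleftrightarrow> adp n \<alpha> \<beta> \<gamma> \<noteq> 0)
       \<and> (cadp 1 n \<alpha> \<beta> \<gamma> \<noteq> 0 \<longleftrightarrow> adp n \<alpha> \<beta> \<gamma> \<noteq> 0 \<and> \<gamma> \<noteq> 0)"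
proof -
  define S where "S = carry_support (omega_list n \<alpha> \<beta> \<gamma>)"
  have "covers_last_carry False S"
    and "\<gamma> \<noteq> 0 \<Longrightarrow> covers_last_carry True S"
    and "\<gamma> = 0 \<Longrightarrow> \<forall>s\<in>S. even s"
    using carry_support_invariant[OF omega_list_less_8[of n \<alpha> \<beta> \<gamma>]]
      odd_omega_iff_nonzero[OF assms(3)]
    unfolding S_def by auto
  moreover have "cadp 0 n \<alpha> \<beta> \<gamma> \<noteq> 0 \<longleftrightarrow> (\<exists>s\<in>S. even s)"
    and "cadp 1 n \<alpha> \<beta> \<gamma> \<noteq> 0 \<longleftrightarrow> (\<exists>s\<in>S. odd s)"
    by (simp_all add: cadp_nonzero_iff S_def even_iff_mod_2_eq_zero odd_iff_mod_2_eq_one)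
  moreover have "adp n \<alpha> \<beta> \<gamma> \<noteq> 0 \<longleftrightarrow> S \<noteq> {}"
    unfolding S_def by (rule adp_nonzero_iff_carry_support[OF assms])
  ultimately show ?thesis
    unfolding covers_last_carry_def by (cases "\<gamma> = 0") blast+
qed

end
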